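(* Let $X$ be a uniformly discrete metric space of bounded geometry which has property A. Then $\inf_{S>0}\epsilon_{X;1}(S)=0$.
   Context: A metric space is uniformly discrete if there is $r>0$ such that $d(x,y)<r$ implies $x=y$. For a metric space $(X,d)$ and $1\le p<\infty$, $\ell^p(X)$ is the space of $p$-summable real functions on $X$ and $\ell^p_1(X)$ its unit sphere. For a map $\xi\colon X\to\ell^p(X)$, written $x\mapsto\xi_x$, put $S(\xi)=\sup\{d(x,y):\xi_x(y)\neq0\}$ and $\varepsilon(\xi;p)=\sup_{x\ne y}\|\xi_x-\xi_y\|_p/d(x,y)$. The profile is $\epsilon_{X;p}(S)=\inf\{\varepsilon(\xi;p):\xi\colon X\to\ell^p_1(X),\ S(\xi)\le S\}$. A metric space has bounded geometry if for every $R$ there is $C$ such that every $R$-ball has at most $C$ points. A discrete metric space $X$ of bounded geometry has property A if for every $R>0$ and $\epsilon>0$ there is $\xi\colon X\to\ell^1_1(X)$ with $S(\xi)<\infty$ and $\|\xi_x-\xi_y\|_1\le\epsilon$ whenever $d(x,y)\le R$. *)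

theory Defs
  imports "HOL-Analysis.Analysis"
begin

text \<open>The metric space X is the whole carrier type 'a of class metric_space, with d = dist.\<close>

definition uniformly_discrete :: "'a::metric_space itself \<Rightarrow> bool" where
  "uniformly_discrete _ \<longleftrightarrow> (\<exists>r>0. \<forall>x y::'a. dist x y < r \<longrightarrow> x = y)"

definition bounded_geometry :: "'a::metric_space itself \<Rightarrow> bool" where
  "bounded_geometry _ \<longleftrightarrow>
     (\<forall>R. \<exists>C::nat. \<forall>x::'a. finite (cball x R) \<and> card (cball x R) \<le> C)"

definition in_lp :: "real \<Rightarrow> ('a \<Rightarrow> real) \<Rightarrow> bool" where
  "in_lp p f \<longleftrightarrow> (\<lambda>y. \<bar>f y\<bar> powr p) summable_on UNIV"

definition lp_norm :: "real \<Rightarrow> ('a \<Rightarrow> real) \<Rightarrow> real" where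
  "lp_norm p f = (\<Sum>\<^sub>\<infinity>y. \<bar>f y\<bar> powr p) powr (1 / p)"

definition lp_sphere :: "real \<Rightarrow> ('a \<Rightarrow> real) set" where
  "lp_sphere p = {f. in_lp p f \<and> lp_norm p f = 1}"

definition support_within :: "('a::metric_space \<Rightarrow> 'a \<Rightarrow> real) \<Rightarrow> real \<Rightarrow> bool" where
  "support_within \<xi> S \<longleftrightarrow> (\<forall>x y. \<xi> x y \<noteq> 0 \<longrightarrow> dist x y \<le> S)"

text \<open>epsilon(xi;p) = sup over x \<noteq> y of ||xi_x - xi_y||_p / d(x,y), valued in extended reals
  (0 when X has a single point; all quotients are nonnegative).\<close>

definition eps_xi :: "real \<Rightarrow> ('a::metric_space \<Rightarrow> 'a \<Rightarrow> real) \<Rightarrow> ereal" where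
  "eps_xi p \<xi> = Sup (insert 0
     {ereal (lp_norm p (\<lambda>z. \<xi> x z - \<xi> y z) / dist x y) | x y. x \<noteq> y})"

definition profile :: "'a::metric_space itself \<Rightarrow> real \<Rightarrow> real \<Rightarrow> ereal" where
  "profile _ p S = Inf {eps_xi p \<xi> | \<xi> :: 'a \<Rightarrow> 'a \<Rightarrow> real.
       (\<forall>x. \<xi> x \<in> lp_sphere p) \<and> support_within \<xi> S}"

definition property_A :: "'a::metric_space itself \<Rightarrow> bool" where
  "property_A _ \<longleftrightarrow> (\<forall>R>0. \<forall>e>0. \<exists>\<xi> :: 'a \<Rightarrow> 'a \<Rightarrow> real.
       (\<forall>x. \<xi> x \<in> lp_sphere 1) \<and> (\<exists>S. support_within \<xi> S) \<and>
       (\<forall>x y. dist x y \<le> R \<longrightarrow> lp_norm 1 (\<lambda>z. \<xi> x z - \<xi> y z) \<le> e))"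

end

theory Submission
  imports Defs
begin

text \<open>Let \<open>r\<close> be the separation constant of \<open>X\<close> and \<open>\<epsilon> > 0\<close>. Property A gives \<open>\<xi>\<close>
  of finite support radius with \<open>\<parallel>\<xi>\<^sub>x - \<xi>\<^sub>y\<parallel>\<^sub>1 \<le> \<epsilon> r\<close> whenever \<open>d(x,y) \<le> 2/\<epsilon>\<close>.
  For such distinct \<open>x, y\<close> we have \<open>r \<le> d(x,y)\<close>, hence \<open>\<parallel>\<xi>\<^sub>x - \<xi>\<^sub>y\<parallel>\<^sub>1 \<le> \<epsilon> d(x,y)\<close>;
  for \<open>d(x,y) > 2/\<epsilon>\<close> the trivial bound \<open>\<parallel>\<xi>\<^sub>x - \<xi>\<^sub>y\<parallel>\<^sub>1 \<le> 2\<close> gives the same.\<close>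

lemma lp_norm_1: "lp_norm 1 f = (\<Sum>\<^sub>\<infinity>y. \<bar>f y\<bar>)"
  unfolding lp_norm_def by (simp add: infsum_nonneg)

lemma lp_norm_1_diff_le:
  assumes "in_lp 1 f" "in_lp 1 g"
  shows "lp_norm 1 (\<lambda>z. f z - g z) \<le> lp_norm 1 f + lp_norm 1 g"
proof -
  have sum_fg: "(\<lambda>y. \<bar>f y\<bar> + \<bar>g y\<bar>) summable_on UNIV"
    using assms by (simp add: in_lp_def summable_on_add)
  have "(\<lambda>y. \<bar>f y - g y\<bar>) summable_on UNIV"
    by (rule summable_on_comparison_test[OF sum_fg]) auto
  then have "(\<Sum>\<^sub>\<infinity>y. \<bar>f y - g y\<bar>) \<le> (\<Sum>\<^sub>\<infinity>y. \<bar>f y\<bar> + \<bar>g y\<bar>)"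
    by (rule infsum_mono[OF _ sum_fg]) auto
  also have "\<dots> = (\<Sum>\<^sub>\<infinity>y. \<bar>f y\<bar>) + (\<Sum>\<^sub>\<infinity>y. \<bar>g y\<bar>)"
    using assms by (simp add: in_lp_def infsum_add)
  finally show ?thesis by (simp add: lp_norm_1)
qed

lemma lp_sphere_1_diff_le_2:
  assumes "f \<in> lp_sphere 1" "g \<in> lp_sphere 1"
  shows "lp_norm 1 (\<lambda>z. f z - g z) \<le> 2"
  using lp_norm_1_diff_le[of f g] assms by (simp add: lp_sphere_def)

lemma support_within_mono: "support_within \<xi> S \<Longrightarrow> S \<le> T \<Longrightarrow> support_within \<xi> T"
  unfolding support_within_def by force

lemma eps_xi_nonneg: "0 \<le> eps_xi p \<xi>"
  unfolding eps_xi_def by (rule Sup_upper) simp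

lemma eps_xi_le:
  assumes "0 \<le> c" and "\<And>x y. x \<noteq> y \<Longrightarrow> lp_norm p (\<lambda>z. \<xi> x z - \<xi> y z) \<le> c * dist x y"
  shows "eps_xi p \<xi> \<le> ereal c"
  unfolding eps_xi_def
proof (rule Sup_least)
  fix u
  assume "u \<in> insert 0 {ereal (lp_norm p (\<lambda>z. \<xi> x z - \<xi> y z) / dist x y) | x y. x \<noteq> y}"
  then show "u \<le> ereal c"
    using assms by (auto simp: divide_le_eq)
qed

lemma profile_nonneg: "0 \<le> profile TYPE('a::metric_space) p S"
  unfolding profile_def by (rule Inf_greatest) (auto intro: eps_xi_nonneg)

lemma profile_le_eps_xi:
  fixes \<xi> :: "'a::metric_space \<Rightarrow> 'a \<Rightarrow> real"
  assumes "\<And>x. \<xi> x \<in> lp_sphere p" and "support_within \<xi> S"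
  shows "profile TYPE('a) p S \<le> eps_xi p \<xi>"
  unfolding profile_def by (rule Inf_lower) (use assms in blast)

lemma INF_profile_le_eps_xi:
  fixes \<xi> :: "'a::metric_space \<Rightarrow> 'a \<Rightarrow> real"
  assumes "\<And>x. \<xi> x \<in> lp_sphere p" and "support_within \<xi> S"
  shows "(INF S\<in>{0<..}. profile TYPE('a) p S) \<le> eps_xi p \<xi>"
proof -
  have "(INF S\<in>{0<..}. profile TYPE('a) p S) \<le> profile TYPE('a) p (max S 1)"
    by (rule INF_lower) simp
  also have "\<dots> \<le> eps_xi p \<xi>"
    by (intro profile_le_eps_xi assms support_within_mono[OF assms(2)]) simp
  finally show ?thesis .
qed

lemma eps_xi_le_of_local_bound:
  fixes \<xi> :: "'a::metric_space \<Rightarrow> 'a \<Rightarrow> real"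
  assumes "e > 0"
    and separated: "\<And>x y::'a. x \<noteq> y \<Longrightarrow> r \<le> dist x y"
    and sphere: "\<And>x. \<xi> x \<in> lp_sphere 1"
    and close: "\<And>x y. dist x y \<le> 2 / e \<Longrightarrow> lp_norm 1 (\<lambda>z. \<xi> x z - \<xi> y z) \<le> e * r"
  shows "eps_xi 1 \<xi> \<le> ereal e"
proof (rule eps_xi_le)
  fix x y :: 'a
  assume "x \<noteq> y"
  show "lp_norm 1 (\<lambda>z. \<xi> x z - \<xi> y z) \<le> e * dist x y"
  proof (cases "dist x y \<le> 2 / e")
    case True
    have "e * r \<le> e * dist x y"
      using separated[OF \<open>x \<noteq> y\<close>] \<open>e > 0\<close> by simp
    then show ?thesis
      using close[OF True] by linarith
  next
    case False
    then have "2 \<le> e * dist x y"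
      using \<open>e > 0\<close> by (simp add: field_simps)
    then show ?thesis
      using lp_sphere_1_diff_le_2[OF sphere sphere, of x y] by linarith
  qed
qed (use \<open>e > 0\<close> in simp)

theorem proposition2p1p7:
  assumes "uniformly_discrete TYPE('a::metric_space)"
    and "bounded_geometry TYPE('a)"
    and "property_A TYPE('a)"
  shows "(INF S\<in>{0<..}. profile TYPE('a) 1 S) = 0"
proof (rule antisym)
  obtain r where "r > 0" and separated: "\<And>x y::'a. x \<noteq> y \<Longrightarrow> r \<le> dist x y"
    using assms(1) unfolding uniformly_discrete_def by (meson not_less)
  have small: "(INF S\<in>{0<..}. profile TYPE('a) 1 S) \<le> ereal e" if "e > 0" for e
  proof -
    have pos: "2 / e > 0" "e * r > 0"
      using \<open>e > 0\<close> \<open>r > 0\<close> by auto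
    obtain \<xi> :: "'a \<Rightarrow> 'a \<Rightarrow> real" and S where sphere: "\<And>x. \<xi> x \<in> lp_sphere 1"
      and support: "support_within \<xi> S"
      and close: "\<And>x y. dist x y \<le> 2 / e \<Longrightarrow> lp_norm 1 (\<lambda>z. \<xi> x z - \<xi> y z) \<le> e * r"
      using assms(3)[unfolded property_A_def, rule_format, OF pos] by blast
    have "(INF S\<in>{0<..}. profile TYPE('a) 1 S) \<le> eps_xi 1 \<xi>"
      using sphere support by (rule INF_profile_le_eps_xi)
    also have "\<dots> \<le> ereal e"
      using \<open>e > 0\<close> separated sphere close by (rule eps_xi_le_of_local_bound)
    finally show ?thesis .
  qed
  show "(INF S\<in>{0<..}. profile TYPE('a) 1 S) \<le> 0"
    by (rule ereal_le_epsilon2) (simp add: small)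
  show "0 \<le> (INF S\<in>{0<..}. profile TYPE('a) 1 S)"
    by (rule INF_greatest) (rule profile_nonneg)
qed

end
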